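(* There is an absolute constant $C>0$ such that the following holds. Let $S$ and $T$ be valid configurations of $n\ge 2$ points each whose smallest enclosing discs have the same center. Then there exists a translation $\vec v$ such that the unlabeled problem from $S$ to $T+\vec v$ is feasible, $|\vec v|\le C\,(r(S)+r(T))\,n$, and $r(S\cup(T+\vec v))\le C\,(r(S)+r(T))\,n$.
   Context: For $p\in\mathbb R^2$, $D(p)$ is the open unit disc centered at $p$. A configuration is a finite set of points in $\mathbb R^2$; it is valid if any two distinct points are at distance at least $2$. $r(P)$ is the radius of the smallest closed disc containing the point set $P$. The unlabeled problem from $S$ to $T'$ is feasible if there exist a bijection $M:S\to T'$ and an ordering $s_1,\dots,s_n$ of $S$ such that for each $i$ the region $\mathrm{conv}(D(s_i)\cup D(M(s_i)))$ swept by translating $D(s_i)$ straight to $M(s_i)$ is disjoint from $D(s_j)$ for all $j>i$ and from $D(M(s_j))$ for all $j<i$. *)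

theory Defs
  imports "HOL-Analysis.Analysis"
begin

type_synonym pt = "real^2"

definition D :: "pt \<Rightarrow> pt set" where
  "D p = ball p 1"

definition valid_config :: "pt set \<Rightarrow> bool" where
  "valid_config P \<longleftrightarrow> finite P \<and> (\<forall>p\<in>P. \<forall>q\<in>P. p \<noteq> q \<longrightarrow> dist p q \<ge> 2)"

definition rad :: "pt set \<Rightarrow> real" where
  "rad P = Inf {\<rho>. \<rho> \<ge> 0 \<and> (\<exists>c. P \<subseteq> cball c \<rho>)}"

definition sed_center :: "pt set \<Rightarrow> pt \<Rightarrow> bool" where
  "sed_center P c \<longleftrightarrow> P \<subseteq> cball c (rad P)"

text \<open>Region swept by translating D(s) straight to t.\<close>
definition swept :: "pt \<Rightarrow> pt \<Rightarrow> pt set" where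
  "swept s t = convex hull (D s \<union> D t)"

definition unlabeled_feasible :: "pt set \<Rightarrow> pt set \<Rightarrow> bool" where
  "unlabeled_feasible S T \<longleftrightarrow>
     (\<exists>M s. bij_betw M S T \<and> bij_betw s {..<card S} S \<and>
        (\<forall>i<card S.
           (\<forall>j. i < j \<and> j < card S \<longrightarrow> swept (s i) (M (s i)) \<inter> D (s j) = {}) \<and>
           (\<forall>j<i. swept (s i) (M (s i)) \<inter> D (M (s j)) = {})))"

end

theory Submission
  imports Defs
begin

text \<open>Sort both configurations along a direction \<open>u\<close> and move, in that order, the \<open>i\<close>-th disc of
  \<open>S\<close> to the \<open>i\<close>-th disc of \<open>T + L u\<close>. The discs still waiting in \<open>S\<close> lie behind the moving
  disc along \<open>u\<close> and the parked discs of \<open>T + L u\<close> lie ahead of its target, while the motion deviates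
  from \<open>L u\<close> by at most \<open>R = r(S) + r(T)\<close>. This deviation is harmless for discs at distance at
  least 4; for nearer ones it suffices that \<open>u\<close> separates every close pair by a margin \<open>\<eta>\<close> with
  \<open>L \<eta> \<ge> 4 R\<close>. By packing there are only \<open>O(n)\<close> close pairs, and each rules out at most one of the
  directions \<open>(1, k / 2N)\<close>, \<open>k \<le> N\<close>; so for \<open>N = 48 n\<close> some direction has margin \<open>1 / 4N\<close>,
  giving \<open>L = O(R n)\<close>.\<close>

lemma card_separated_in_ball_le:
  fixes A :: "'a::euclidean_space set"
  assumes fin: "finite A"
    and sep: "\<And>a b. a \<in> A \<Longrightarrow> b \<in> A \<Longrightarrow> a \<noteq> b \<Longrightarrow> 2 \<le> dist a b"
    and near: "\<And>a. a \<in> A \<Longrightarrow> dist p a < r" and r: "0 \<le> r"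
  shows "real (card A) \<le> (r + 1) ^ DIM('a)"
proof -
  define m where "m = measure lborel (ball (0::'a) 1)"
  have "m > 0" unfolding m_def by (rule content_ball_pos) simp
  have ball_measure: "measure lebesgue (ball a \<rho>) = \<rho> ^ DIM('a) * m" if "0 \<le> \<rho>" for a :: 'a and \<rho>
    using content_ball_conv_unit_ball[OF that, of a] by (simp add: m_def)
  have "pairwise (\<lambda>a b. disjnt (ball a 1) (ball b 1)) A"
  proof (unfold pairwise_def disjnt_iff, intro ballI impI allI notI)
    fix a b x assume "a \<in> A" "b \<in> A" "a \<noteq> b" "x \<in> ball a 1 \<and> x \<in> ball b 1"
    then show False using sep[of a b] dist_triangle_less_add[of a x 1 b 1] by (simp add: dist_commute)
  qed
  then have "measure lebesgue (\<Union>a\<in>A. ball a 1) = (\<Sum>a\<in>A. measure lebesgue (ball a 1))"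
    by (intro measure_UNION' fin) simp
  also have "\<dots> = real (card A) * m" using ball_measure[of 1] by simp
  finally have "real (card A) * m = measure lebesgue (\<Union>a\<in>A. ball a 1)" ..
  also have "\<dots> \<le> measure lebesgue (ball p (r + 1))"
  proof (rule measure_mono_fmeasurable)
    show "(\<Union>a\<in>A. ball a 1) \<subseteq> ball p (r + 1)"
    proof
      fix x assume "x \<in> (\<Union>a\<in>A. ball a 1)"
      then obtain a where "a \<in> A" "dist a x < 1" by auto
      then show "x \<in> ball p (r + 1)" using near[of a] dist_triangle_less_add[of p a r x 1] by (simp add: dist_commute)
    qed
  qed (auto intro: fmeasurableD simp: fin)
  also have "\<dots> = (r + 1) ^ DIM('a) * m" using r ball_measure by simp
  finally show ?thesis using \<open>m > 0\<close> by simp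
qed

definition close_pairs :: "'a::metric_space set \<Rightarrow> ('a \<times> 'a) set" where
  "close_pairs A = {(p, q). p \<in> A \<and> q \<in> A \<and> p \<noteq> q \<and> dist p q < 4}"

lemma finite_close_pairs: "finite A \<Longrightarrow> finite (close_pairs A)"
  by (rule finite_subset[of _ "A \<times> A"]) (auto simp: close_pairs_def)

lemma card_close_pairs_le:
  fixes A :: "'a::euclidean_space set"
  assumes fin: "finite A"
    and sep: "\<And>a b. a \<in> A \<Longrightarrow> b \<in> A \<Longrightarrow> a \<noteq> b \<Longrightarrow> 2 \<le> dist a b"
  shows "real (card (close_pairs A)) \<le> real (card A) * (5 ^ DIM('a) - 1)"
proof -
  have neighbours: "real (card ({q\<in>A. dist p q < 4} - {p})) \<le> 5 ^ DIM('a) - 1" if "p \<in> A" for p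
  proof -
    have "real (card {q\<in>A. dist p q < 4}) \<le> (4 + 1) ^ DIM('a)"
      using fin sep by (intro card_separated_in_ball_le) auto
    moreover have "card {q\<in>A. dist p q < 4} \<ge> 1"
      using that fin by (auto intro!: Suc_leI exI[of _ p] simp: card_gt_0_iff)
    ultimately show ?thesis using that by (simp add: card_Diff_singleton of_nat_diff)
  qed
  have pairs: "close_pairs A = Sigma A (\<lambda>p. {q\<in>A. dist p q < 4} - {p})"
    by (auto simp: close_pairs_def)
  have "card (Sigma A (\<lambda>p. {q\<in>A. dist p q < 4} - {p}))
      = (\<Sum>p\<in>A. card ({q\<in>A. dist p q < 4} - {p}))"
    using fin by (intro card_SigmaI) auto
  then have "real (card (close_pairs A)) = (\<Sum>p\<in>A. real (card ({q\<in>A. dist p q < 4} - {p})))"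
    by (simp only: pairs of_nat_sum)
  also have "\<dots> \<le> (\<Sum>p\<in>A. 5 ^ DIM('a) - 1)"
    by (rule sum_mono) (rule neighbours)
  finally show ?thesis by (simp only: sum_constant)
qed

lemma convex_hull_balls_subset:
  fixes a b :: "'a::real_normed_vector"
  shows "convex hull (ball a r \<union> ball b r) \<subseteq> closed_segment a b + ball 0 r"
proof (rule hull_minimal)
  show "convex (closed_segment a b + ball 0 r)"
    by (simp add: convex_set_plus)
  have "ball x r \<subseteq> closed_segment a b + ball 0 r" if "x \<in> closed_segment a b" for x
  proof
    fix y assume "y \<in> ball x r"
    then have "y - x \<in> ball 0 r" by (simp add: dist_norm norm_minus_commute)
    with that have "x + (y - x) \<in> closed_segment a b + ball 0 r" by (rule set_plus_intro)
    then show "y \<in> closed_segment a b + ball 0 r" by simp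
  qed
  then show "ball a r \<union> ball b r \<subseteq> closed_segment a b + ball 0 r" by auto
qed

lemma swept_disjoint_D:
  assumes far: "\<And>q. q \<in> closed_segment a b \<Longrightarrow> 2 \<le> dist p q"
  shows "swept a b \<inter> D p = {}"
proof -
  have "x \<notin> ball p 1" if x: "x \<in> closed_segment a b + ball 0 1" for x
  proof -
    obtain q y where "x = q + y" "q \<in> closed_segment a b" "y \<in> ball 0 1"
      using set_plus_elim[OF x] .
    then show ?thesis using far[of q] dist_triangle[of p q x] by (simp add: dist_norm)
  qed
  then show ?thesis
    using convex_hull_balls_subset[of a 1 b] by (auto simp: swept_def D_def)
qed

lemma power2_norm_diff_scaleR:
  fixes d w :: "'a::real_inner"
  shows "(norm (d - l *\<^sub>R w))\<^sup>2 = (norm d)\<^sup>2 - 2 * l * (d \<bullet> w) + l\<^sup>2 * (norm w)\<^sup>2"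
  unfolding power2_norm_eq_inner by (simp add: algebra_simps inner_commute power2_eq_square)

lemma norm_le_norm_diff_scaleR:
  fixes d w :: "'a::real_inner"
  assumes "d \<bullet> w \<le> 0" and "0 \<le> l"
  shows "norm d \<le> norm (d - l *\<^sub>R w)"
proof -
  have "2 * l * (d \<bullet> w) \<le> 0" using assms by (simp add: mult_nonneg_nonpos)
  moreover have "0 \<le> l\<^sup>2 * (norm w)\<^sup>2" by simp
  ultimately have "(norm d)\<^sup>2 \<le> (norm (d - l *\<^sub>R w))\<^sup>2"
    unfolding power2_norm_diff_scaleR by linarith
  then show ?thesis by (rule power2_le_imp_le) simp
qed

lemma two_le_norm_diff_scaleR:
  fixes d w :: "'a::real_inner"
  assumes d: "4 \<le> norm d" and dw: "d \<bullet> w \<le> norm d * R" and w: "2 * R \<le> norm w"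
    and R: "0 \<le> R" and l: "0 \<le> l"
  shows "2 \<le> norm (d - l *\<^sub>R w)"
proof -
  have "2 * l * (d \<bullet> w) \<le> 2 * l * (norm d * R)"
    using dw l by (simp add: mult_left_mono)
  moreover have "(2 * R)\<^sup>2 \<le> (norm w)\<^sup>2"
    using w R by (intro power_mono) auto
  then have "l\<^sup>2 * (2 * R)\<^sup>2 \<le> l\<^sup>2 * (norm w)\<^sup>2"
    by (simp add: mult_left_mono)
  ultimately have "(norm d)\<^sup>2 - 2 * l * (norm d * R) + l\<^sup>2 * (2 * R)\<^sup>2 \<le> (norm (d - l *\<^sub>R w))\<^sup>2"
    unfolding power2_norm_diff_scaleR by linarith
  moreover have "(norm d)\<^sup>2 - 2 * l * (norm d * R) + l\<^sup>2 * (2 * R)\<^sup>2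
      = (2 * l * R - norm d / 2)\<^sup>2 + 3 / 4 * (norm d)\<^sup>2"
    by (simp add: power2_eq_square algebra_simps)
  moreover have "4\<^sup>2 \<le> (norm d)\<^sup>2"
    using d by (intro power_mono) auto
  moreover have "(4::real)\<^sup>2 = 16" "(2::real)\<^sup>2 = 4" by simp_all
  ultimately have "2\<^sup>2 \<le> (norm (d - l *\<^sub>R w))\<^sup>2"
    using zero_le_power2[of "2 * l * R - norm d / 2"] by linarith
  then show ?thesis by (rule power2_le_imp_le) simp
qed

text \<open>Points \<open>p\<close> with \<open>|p - a| \<ge> 4\<close> are avoided because \<open>b - a\<close> deviates from \<open>L u\<close> by at
  most \<open>R\<close>; nearer ones because the margin \<open>\<eta>\<close> makes \<open>b - a\<close> point away from them.\<close>
lemma dist_closed_segment_ge_2: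
  fixes a b p u :: "'a::real_inner"
  assumes err: "norm (b - a - L *\<^sub>R u) \<le> R" and u: "1 \<le> norm u"
    and L: "3 * R \<le> L" and R: "0 \<le> R" and margin: "4 * R \<le> L * \<eta>"
    and pa: "2 \<le> dist p a" and behind: "(p - a) \<bullet> u \<le> 0"
    and near: "dist p a < 4 \<Longrightarrow> \<eta> \<le> \<bar>(p - a) \<bullet> u\<bar>"
    and q: "q \<in> closed_segment a b"
  shows "2 \<le> dist p q"
proof -
  obtain l where l: "0 \<le> l" "q = a + l *\<^sub>R (b - a)"
    using q by (auto simp: closed_segment_def algebra_simps)
  define d where "d = p - a"
  define e where "e = b - a - L *\<^sub>R u"
  have pq: "dist p q = norm (d - l *\<^sub>R (b - a))"
    by (simp add: l d_def dist_norm algebra_simps)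
  have dw: "d \<bullet> (b - a) = L * (d \<bullet> u) + d \<bullet> e"
    by (simp add: e_def inner_diff_right)
  have de: "d \<bullet> e \<le> norm d * R"
    using norm_cauchy_schwarz[of d e] mult_left_mono[OF err[folded e_def], of "norm d"] by simp
  have "0 \<le> L" using L R by linarith
  show ?thesis
  proof (cases "norm d < 4")
    case True
    then have "d \<bullet> u \<le> - \<eta>" using near behind by (auto simp: d_def dist_norm)
    then have "L * (d \<bullet> u) \<le> - (L * \<eta>)"
      using \<open>0 \<le> L\<close> by (metis mult_left_mono mult_minus_right)
    moreover have "norm d * R \<le> 4 * R" using True R by (simp add: mult_right_mono)
    ultimately have "d \<bullet> (b - a) \<le> 0" using dw de margin by linarith
    then have "norm d \<le> norm (d - l *\<^sub>R (b - a))"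
      using l(1) by (rule norm_le_norm_diff_scaleR)
    then show ?thesis using pa pq unfolding d_def dist_norm by linarith
  next
    case False
    have "L \<le> norm (L *\<^sub>R u)" using u \<open>0 \<le> L\<close> mult_left_mono[OF u] by simp
    moreover have "norm (L *\<^sub>R u) - norm (L *\<^sub>R u - (b - a)) \<le> norm (L *\<^sub>R u - (L *\<^sub>R u - (b - a)))"
      by (rule norm_triangle_ineq2)
    then have "norm (L *\<^sub>R u) - norm (b - a - L *\<^sub>R u) \<le> norm (b - a)"
      by (simp add: norm_minus_commute)
    ultimately have "2 * R \<le> norm (b - a)" using err L by linarith
    moreover have "L * (d \<bullet> u) \<le> 0"
      using \<open>0 \<le> L\<close> behind by (simp add: d_def mult_nonneg_nonpos)
    then have "d \<bullet> (b - a) \<le> norm d * R" using dw de by linarith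
    ultimately show ?thesis
      unfolding pq using False R l(1) by (intro two_le_norm_diff_scaleR) auto
  qed
qed

lemma swept_commute: "swept a b = swept b a"
  by (simp add: swept_def Un_commute)

lemma swept_disjoint_D_if_behind:
  assumes "norm (b - a - L *\<^sub>R u) \<le> R" "1 \<le> norm u" "3 * R \<le> L" "0 \<le> R"
    "4 * R \<le> L * \<eta>" "2 \<le> dist p a" "(p - a) \<bullet> u \<le> 0"
    "dist p a < 4 \<Longrightarrow> \<eta> \<le> \<bar>(p - a) \<bullet> u\<bar>"
  shows "swept a b \<inter> D p = {}"
  using dist_closed_segment_ge_2[OF assms] by (rule swept_disjoint_D)

lemma linear_form_small_at_most_once:
  fixes d1 d2 x y h :: real
  assumes d: "4 \<le> d1\<^sup>2 + d2\<^sup>2" and xy: "0 \<le> x" "x \<le> 1/2" "0 \<le> y" "y \<le> 1/2"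
    and xy_far: "h \<le> \<bar>x - y\<bar>" and h: "0 < h" "h \<le> 1"
    and small_x: "\<bar>d1 + d2 * x\<bar> < h / 2" and small_y: "\<bar>d1 + d2 * y\<bar> < h / 2"
  shows False
proof (cases "\<bar>d2\<bar> \<le> \<bar>d1\<bar>")
  case True
  then have "1 \<le> \<bar>d1\<bar>"
    using d abs_le_square_iff[of d2 d1] abs_le_square_iff[of 1 d1] by simp
  moreover have "\<bar>d2 * x\<bar> \<le> \<bar>d1\<bar> / 2"
    using mult_mono[of "\<bar>d2\<bar>" "\<bar>d1\<bar>" "\<bar>x\<bar>" "1/2"] True xy by (simp add: abs_mult)
  ultimately show False using small_x h by linarith
next
  case False
  then have "1 < \<bar>d2\<bar>"
    using d abs_le_square_iff[of d2 d1] abs_le_square_iff[of d2 1] by simp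
  then have "h \<le> \<bar>d2 * (x - y)\<bar>"
    using mult_mono[of 1 "\<bar>d2\<bar>" h "\<bar>x - y\<bar>"] xy_far h by (simp add: abs_mult)
  moreover have "d2 * (x - y) = (d1 + d2 * x) - (d1 + d2 * y)" by (simp add: algebra_simps)
  ultimately show False using small_x small_y by linarith
qed

definition slope_dir :: "nat \<Rightarrow> nat \<Rightarrow> pt" where
  "slope_dir N k = vector [1, real k / (2 * real N)]"

lemma inner_slope_dir: "d \<bullet> slope_dir N k = d $ 1 + d $ 2 * (real k / (2 * real N))"
  by (simp add: slope_dir_def inner_vec_def sum_2)

lemma norm_slope_dir_ge: "1 \<le> norm (slope_dir N k)"
  using component_le_norm_cart[of "slope_dir N k" 1] by (simp add: slope_dir_def)

lemma norm_slope_dir_le: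
  assumes "k \<le> N" shows "norm (slope_dir N k) \<le> 3 / 2"
proof -
  have "real k / (2 * real N) \<le> 1 / 2"
    using assms by (cases "N = 0") (auto simp: field_simps)
  moreover have "norm (slope_dir N k) \<le> (\<Sum>i\<in>UNIV. \<bar>slope_dir N k $ i\<bar>)"
    by (rule norm_le_l1_cart)
  ultimately show ?thesis by (simp add: slope_dir_def sum_2)
qed

lemma power2_norm_vec2: "(norm (d::pt))\<^sup>2 = (d $ 1)\<^sup>2 + (d $ 2)\<^sup>2"
  unfolding power2_norm_eq_inner by (simp add: inner_vec_def sum_2 power2_eq_square)

lemma slope_dir_small_inner_unique:
  assumes d: "2 \<le> norm d" and k: "k \<le> N" "k' \<le> N"
    and small: "\<bar>d \<bullet> slope_dir N k\<bar> < 1 / (4 * real N)" "\<bar>d \<bullet> slope_dir N k'\<bar> < 1 / (4 * real N)"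
  shows "k = k'"
proof (rule ccontr)
  assume "k \<noteq> k'"
  then have N: "0 < real N" using k by auto
  define h where "h = 1 / (2 * real N)"
  define x where "x = real k / (2 * real N)"
  define x' where "x' = real k' / (2 * real N)"
  have "(2::real)\<^sup>2 \<le> (norm d)\<^sup>2" using d by (intro power_mono) auto
  then have "4 \<le> (d $ 1)\<^sup>2 + (d $ 2)\<^sup>2" by (simp add: power2_norm_vec2)
  moreover have "0 \<le> x" "x \<le> 1/2" "0 \<le> x'" "x' \<le> 1/2"
    using k N by (auto simp: x_def x'_def field_simps)
  moreover have "h \<le> \<bar>x - x'\<bar>"
  proof -
    have "1 \<le> \<bar>real k - real k'\<bar>" using \<open>k \<noteq> k'\<close> by linarith
    moreover have "x - x' = (real k - real k') * h"
      unfolding x_def x'_def h_def using N by (simp add: field_simps)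
    moreover have "0 < h" using N by (simp add: h_def)
    ultimately show ?thesis
      using mult_right_mono[of 1 "\<bar>real k - real k'\<bar>" h] by (simp add: abs_mult)
  qed
  moreover have "0 < h" "h \<le> 1" using N by (auto simp: h_def field_simps)
  moreover have "1 / (4 * real N) = h / 2" by (simp add: h_def)
  ultimately show False
    using linear_form_small_at_most_once[of "d $ 1" "d $ 2" x x' h] small
    unfolding inner_slope_dir x_def[symmetric] x'_def[symmetric] by simp
qed

lemma ex_not_in_small_sets:
  assumes P: "finite P" and K: "finite K" and card: "card P < card K"
    and small: "\<And>x. x \<in> P \<Longrightarrow> card (B x \<inter> K) \<le> 1"
  shows "\<exists>k\<in>K. \<forall>x\<in>P. k \<notin> B x"
proof -
  have "card (\<Union>x\<in>P. B x \<inter> K) \<le> (\<Sum>x\<in>P. card (B x \<inter> K))"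
    using P by (rule card_UN_le)
  also have "\<dots> \<le> card P" using sum_mono[of P _ "\<lambda>_. 1", OF small] by simp
  finally have "(\<Union>x\<in>P. B x \<inter> K) \<noteq> K" using card by auto
  then show ?thesis by blast
qed

lemma ex_slope_dir_separating:
  assumes P: "finite P" and sep: "\<And>p q. (p, q) \<in> P \<Longrightarrow> 2 \<le> dist p q" and card: "card P \<le> N"
  obtains k where "k \<le> N"
    and "\<And>p q. (p, q) \<in> P \<Longrightarrow> 1 / (4 * real N) \<le> \<bar>(p - q) \<bullet> slope_dir N k\<bar>"
proof -
  define B where "B = (\<lambda>x. {k. \<bar>(fst x - snd x) \<bullet> slope_dir N k\<bar> < 1 / (4 * real N)})"
  have "card (B x \<inter> {..N}) \<le> 1" if "x \<in> P" for x
  proof -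
    obtain p q where x: "x = (p, q)" by fastforce
    have "2 \<le> norm (p - q)" using sep that x by (simp add: dist_norm)
    then have "\<forall>k\<in>B x \<inter> {..N}. \<forall>k'\<in>B x \<inter> {..N}. k = k'"
      by (auto simp: B_def x intro: slope_dir_small_inner_unique)
    then show ?thesis using card_le_Suc0_iff_eq[of "B x \<inter> {..N}"] by auto
  qed
  moreover have "card P < card {..N}" using card by simp
  ultimately obtain k where "k \<in> {..N}" "\<forall>x\<in>P. k \<notin> B x"
    using ex_not_in_small_sets[OF P finite_atMost] by blast
  then show thesis using that by (force simp: B_def not_less)
qed

lemma ex_enumeration_decreasing:
  fixes f :: "'a \<Rightarrow> real"
  assumes "finite S"
  obtains s where "bij_betw s {..<card S} S"
    and "\<And>i j. i < j \<Longrightarrow> j < card S \<Longrightarrow> f (s j) \<le> f (s i)"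
proof -
  obtain xs where xs: "set xs = S" "distinct xs" using finite_distinct_list[OF assms] by blast
  define ys where "ys = sort_key (\<lambda>x. - f x) xs"
  have ys: "set ys = S" "distinct ys" "sorted (map (\<lambda>x. - f x) ys)"
    using xs by (auto simp: ys_def)
  have len: "length ys = card S" using ys distinct_card by fastforce
  show thesis
  proof
    show "bij_betw ((!) ys) {..<card S} S"
      using bij_betw_nth[OF ys(2)] len ys(1) by auto
    show "f (ys ! j) \<le> f (ys ! i)" if "i < j" "j < card S" for i j
      using sorted_nth_mono[OF ys(3), of i j] that len by simp
  qed
qed

lemma unlabeled_feasible_of_enumerations:
  assumes s: "bij_betw s {..<card S} S" and t: "bij_betw t {..<card S} T"
    and ahead: "\<And>i j. i < j \<Longrightarrow> j < card S \<Longrightarrow> swept (s i) (t i) \<inter> D (s j) = {}"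
    and behind: "\<And>i j. j < i \<Longrightarrow> i < card S \<Longrightarrow> swept (s i) (t i) \<inter> D (t j) = {}"
  shows "unlabeled_feasible S T"
proof -
  define M where "M = t \<circ> inv_into {..<card S} s"
  have "bij_betw M S T"
    unfolding M_def by (rule bij_betw_trans[OF bij_betw_inv_into[OF s] t])
  moreover have "M (s i) = t i" if "i < card S" for i
    using inv_into_f_f[OF bij_betw_imp_inj_on[OF s]] that by (simp add: M_def)
  ultimately show ?thesis
    unfolding unlabeled_feasible_def using s ahead behind
    by (intro exI[of _ M] exI[of _ s]) auto
qed

lemma unlabeled_feasible_translate:
  assumes S: "valid_config S" and T: "valid_config T" and card: "card S = card T"
    and dist_ST: "\<And>s t. s \<in> S \<Longrightarrow> t \<in> T \<Longrightarrow> dist s t \<le> R"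
    and separating: "\<And>p q. (p, q) \<in> close_pairs S \<union> close_pairs T \<Longrightarrow> \<eta> \<le> \<bar>(p - q) \<bullet> u\<bar>"
    and u: "1 \<le> norm u" and R: "0 \<le> R" and L: "3 * R \<le> L" and margin: "4 * R \<le> L * \<eta>"
  shows "unlabeled_feasible S ((\<lambda>x. x + L *\<^sub>R u) ` T)"
proof -
  define n where "n = card S"
  define v where "v = L *\<^sub>R u"
  have sep: "\<And>a b. a \<in> A \<Longrightarrow> b \<in> A \<Longrightarrow> a \<noteq> b \<Longrightarrow> 2 \<le> dist a b" if "valid_config A" for A
    using that by (auto simp: valid_config_def)
  obtain s where s: "bij_betw s {..<n} S"
    and s_dec: "\<And>i j. i < j \<Longrightarrow> j < n \<Longrightarrow> s j \<bullet> u \<le> s i \<bullet> u"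
    using ex_enumeration_decreasing[of S "\<lambda>p. p \<bullet> u"] S by (auto simp: valid_config_def n_def)
  obtain t where t: "bij_betw t {..<n} T"
    and t_dec: "\<And>i j. i < j \<Longrightarrow> j < n \<Longrightarrow> t j \<bullet> u \<le> t i \<bullet> u"
    using ex_enumeration_decreasing[of T "\<lambda>p. p \<bullet> u"] T by (auto simp: valid_config_def n_def card)
  have s_in: "s i \<in> S" and t_in: "t i \<in> T" if "i < n" for i
    using bij_betw_apply[OF s] bij_betw_apply[OF t] that by simp_all
  have s_ne: "s i \<noteq> s j" and t_ne: "t i \<noteq> t j" if "i < n" "j < n" "i \<noteq> j" for i j
    using inj_onD[OF bij_betw_imp_inj_on[OF s]] inj_onD[OF bij_betw_imp_inj_on[OF t]] that by auto
  have err: "norm (t i - s i) \<le> R" if "i < n" for i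
    using dist_ST[OF s_in t_in, OF that that] by (simp add: dist_norm norm_minus_commute)
  have t': "bij_betw (\<lambda>i. t i + v) {..<n} ((\<lambda>x. x + v) ` T)"
    using bij_betw_trans[OF t, of "\<lambda>x. x + v"] by (simp add: bij_betw_def inj_on_def comp_def image_image)
  have clear_ahead: "swept (s i) (t i + v) \<inter> D (s j) = {}" if "i < j" "j < n" for i j
  proof -
    have ij: "i < n" "j \<noteq> i" using that by auto
    have err': "norm (t i + v - s i - L *\<^sub>R u) \<le> R" using err[OF ij(1)] by (simp add: v_def)
    have dist: "2 \<le> dist (s j) (s i)"
      using sep[OF S] s_in[OF ij(1)] s_in[OF \<open>j < n\<close>] s_ne[OF \<open>j < n\<close> ij] by simp
    have behind: "(s j - s i) \<bullet> u \<le> 0" using s_dec[OF that] by (simp add: inner_diff_left)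
    have near: "\<eta> \<le> \<bar>(s j - s i) \<bullet> u\<bar>" if "dist (s j) (s i) < 4"
      using separating[of "s j" "s i"] that s_in[OF ij(1)] s_in[OF \<open>j < n\<close>] s_ne[OF \<open>j < n\<close> ij]
      by (simp add: close_pairs_def)
    show ?thesis by (rule swept_disjoint_D_if_behind[OF err' u L R margin dist behind near])
  qed
  have clear_behind: "swept (s i) (t i + v) \<inter> D (t j + v) = {}" if "j < i" "i < n" for i j
  proof -
    have ij: "j < n" "j \<noteq> i" using that by auto
    have err': "norm (s i - (t i + v) - L *\<^sub>R (- u)) \<le> R"
      using err[OF \<open>i < n\<close>] by (simp add: v_def norm_minus_commute)
    have dist: "2 \<le> dist (t j + v) (t i + v)"
      using sep[OF T] t_in[OF ij(1)] t_in[OF \<open>i < n\<close>] t_ne[OF ij(1) \<open>i < n\<close> ij(2)] by simp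
    have behind: "(t j + v - (t i + v)) \<bullet> - u \<le> 0" using t_dec[OF that] by (simp add: inner_diff_left)
    have near: "\<eta> \<le> \<bar>(t j + v - (t i + v)) \<bullet> - u\<bar>" if "dist (t j + v) (t i + v) < 4"
      using separating[of "t j" "t i"] that t_in[OF ij(1)] t_in[OF \<open>i < n\<close>] t_ne[OF ij(1) \<open>i < n\<close> ij(2)]
      by (simp add: close_pairs_def)
    have "1 \<le> norm (- u)" using u by simp
    from swept_disjoint_D_if_behind[OF err' this L R margin dist behind near]
    show ?thesis by (simp add: swept_commute)
  qed
  show ?thesis
    unfolding v_def[symmetric]
    by (rule unlabeled_feasible_of_enumerations[where S = S and t = "\<lambda>i. t i + v", folded n_def,
          OF s t' clear_ahead clear_behind])
qed

lemma rad_le: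
  assumes "A \<subseteq> cball c r" and "0 \<le> r"
  shows "rad A \<le> r"
  unfolding rad_def using assms by (intro cInf_lower bdd_belowI[of _ 0]) auto

lemma rad_nonneg:
  assumes "sed_center A c" and "A \<noteq> {}"
  shows "0 \<le> rad A"
proof -
  obtain a where "a \<in> A" using assms(2) by blast
  then have "dist c a \<le> rad A" using assms(1) by (auto simp: sed_center_def)
  then show ?thesis using zero_le_dist[of c a] by linarith
qed

lemma rad_Un_translate_le:
  assumes "S \<subseteq> cball c r" "T \<subseteq> cball c r'" and "0 \<le> r" "0 \<le> r'"
  shows "rad (S \<union> (\<lambda>x. x + v) ` T) \<le> norm v + r + r'"
proof (rule rad_le)
  have "dist c x \<le> norm v + r + r'" if "x \<in> S" for x
  proof -
    have "dist c x \<le> r" using assms(1) that by auto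
    then show ?thesis using assms(4) norm_ge_zero[of v] by linarith
  qed
  moreover have "dist c (x + v) \<le> norm v + r + r'" if "x \<in> T" for x
  proof -
    have "dist c (x + v) \<le> dist c x + dist x (x + v)" by (rule dist_triangle)
    then show ?thesis using assms(2,3) that by (auto simp: dist_norm)
  qed
  ultimately show "S \<union> (\<lambda>x. x + v) ` T \<subseteq> cball c (norm v + r + r')" by auto
  show "0 \<le> norm v + r + r'" using assms(3,4) by simp
qed

lemma dist_le_rad_add_rad:
  assumes "sed_center S c" "sed_center T c" "s \<in> S" "t \<in> T"
  shows "dist s t \<le> rad S + rad T"
  using assms dist_triangle3[of s t c] by (force simp: sed_center_def)

lemma card_close_pairs_Un_le:
  assumes "valid_config S" "valid_config T" "card S = n" "card T = n"
  shows "card (close_pairs S \<union> close_pairs T) \<le> 48 * n"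
proof -
  have "real (card (close_pairs S)) \<le> 24 * n" "real (card (close_pairs T)) \<le> 24 * n"
    using assms card_close_pairs_le[of S] card_close_pairs_le[of T] by (auto simp: valid_config_def)
  then show ?thesis using card_Un_le[of "close_pairs S" "close_pairs T"] by linarith
qed

lemma ex_feasible_translation:
  assumes S: "valid_config S" and T: "valid_config T" and card: "card S = n" "card T = n"
    and n: "2 \<le> n" and cS: "sed_center S c" and cT: "sed_center T c"
  shows "\<exists>v. unlabeled_feasible S ((\<lambda>x. x + v) ` T) \<and>
           norm v \<le> 1200 * (rad S + rad T) * real n \<and>
           rad (S \<union> (\<lambda>x. x + v) ` T) \<le> 1200 * (rad S + rad T) * real n"
proof -
  define R where "R = rad S + rad T"
  define N where "N = 48 * n"
  have "S \<noteq> {}" "T \<noteq> {}" using card n by auto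
  then have R: "0 \<le> R" using rad_nonneg cS cT by (simp add: R_def)
  have P_fin: "finite (close_pairs S \<union> close_pairs T)"
    using S T by (simp add: valid_config_def finite_close_pairs)
  have P_sep: "2 \<le> dist p q" if "(p, q) \<in> close_pairs S \<union> close_pairs T" for p q
    using S T that by (auto simp: valid_config_def close_pairs_def)
  have P_card: "card (close_pairs S \<union> close_pairs T) \<le> N"
    using card_close_pairs_Un_le[OF S T card] by (simp add: N_def)
  obtain k where k: "k \<le> N"
    and sep: "\<And>p q. (p, q) \<in> close_pairs S \<union> close_pairs T \<Longrightarrow>
      1 / (4 * real N) \<le> \<bar>(p - q) \<bullet> slope_dir N k\<bar>"
    using ex_slope_dir_separating[OF P_fin P_sep P_card] by blast
  define L where "L = 16 * R * real N"
  define v where "v = L *\<^sub>R slope_dir N k"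
  have Rn: "0 \<le> R * real n" and L: "L = 768 * (R * real n)" using R by (simp_all add: L_def N_def)
  have L3: "3 * R \<le> L" using n mult_left_mono[of 3 "768 * real n" R] R by (simp add: L)
  have margin: "4 * R \<le> L * (1 / (4 * real N))" using n by (simp add: L_def N_def)
  have "unlabeled_feasible S ((\<lambda>x. x + v) ` T)"
    unfolding v_def using card dist_le_rad_add_rad[OF cS cT]
    by (intro unlabeled_feasible_translate[OF S T _ _ sep norm_slope_dir_ge R L3 margin])
      (simp_all add: R_def)
  moreover have "norm v \<le> 1152 * (R * real n)"
    using mult_left_mono[OF norm_slope_dir_le[OF k], of L] Rn by (simp add: v_def L)
  moreover have "rad (S \<union> (\<lambda>x. x + v) ` T) \<le> norm v + R"
    using rad_Un_translate_le[of S c "rad S" T "rad T" v] cS cT \<open>S \<noteq> {}\<close> \<open>T \<noteq> {}\<close>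
    by (simp add: sed_center_def rad_nonneg R_def add.assoc)
  moreover have "R \<le> R * real n" using n R mult_left_mono[of 1 "real n" R] by simp
  ultimately show ?thesis
    using Rn by (intro exI[of _ v]) (auto simp: R_def[symmetric] mult.assoc)
qed

theorem mainTheorem7:
  "\<exists>C::real. C > 0 \<and>
     (\<forall>S T n c. valid_config S \<and> valid_config T \<and> card S = n \<and> card T = n \<and> n \<ge> 2 \<and>
        sed_center S c \<and> sed_center T c \<longrightarrow>
        (\<exists>v::pt. unlabeled_feasible S ((\<lambda>x. x + v) ` T) \<and>
           norm v \<le> C * (rad S + rad T) * real n \<and>
           rad (S \<union> (\<lambda>x. x + v) ` T) \<le> C * (rad S + rad T) * real n))"
  by (rule exI[of _ 1200], intro conjI allI impI)
    (simp, (elim conjE, rule ex_feasible_translation, assumption+))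

end
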